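(* Suppose $\mu_i\in\Pr(\mathbb{T})$ ($i\in\omega$) satisfy $\mu_i\,\hat{}\,\mu_i=\mu_i$, and there are sets $E_i\subseteq\mathbb{T}$ ($i\in\omega$) with $\mu_i(E_j)=1$ if $i=j$ and $\mu_i(E_j)=0$ otherwise. Then no limit point of $\{\mu_i:i\in\omega\}$ (in the weak* topology on $\Pr(\mathbb{T})$) is idempotent, i.e. every such limit point $\mu$ satisfies $\mu\,\hat{}\,\mu\neq\mu$.
   Context: For $a,b\subseteq(0,1]$ put $a\,\hat{}\,b=\tfrac12 a\cup\tfrac12(b+1)$; $\mathbb{T}$ is the set generated from $\mathbf{1}=\{1\}$ by $\hat{}$ (free binary system on one generator). $\Pr(\mathbb{T})$ is the set of finitely additive probability measures on $\mathbb{T}$, viewed as positive normalized functionals on $\ell^\infty(\mathbb{T})$ with the weak* topology; $(\mu\,\hat{}\,\nu)(f)=\int\int f(x\,\hat{}\,y)\,d\nu(y)\,d\mu(x)$. *)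

theory Defs
  imports "HOL-Analysis.Analysis"
begin

definition hat :: "real set \<Rightarrow> real set \<Rightarrow> real set" where
  "hat a b = (\<lambda>x. x / 2) ` a \<union> (\<lambda>x. (x + 1) / 2) ` b"

text \<open>The free binary system generated by {1}.\<close>
inductive_set TT :: "real set set" where
  one: "{1} \<in> TT"
| hat: "a \<in> TT \<Longrightarrow> b \<in> TT \<Longrightarrow> hat a b \<in> TT"

definition linf :: "(real set \<Rightarrow> real) set" where
  "linf = {f. bounded (f ` TT) \<and> (\<forall>x. x \<notin> TT \<longrightarrow> f x = 0)}"

text \<open>Pr(TT): positive normalised linear functionals on linf
  (canonically extended by 0 outside linf).\<close>
definition PrT :: "((real set \<Rightarrow> real) \<Rightarrow> real) set" where
  "PrT = {\<phi>. (\<forall>f\<in>linf. \<forall>g\<in>linf. \<phi> (\<lambda>x. f x + g x) = \<phi> f + \<phi> g)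
          \<and> (\<forall>c. \<forall>f\<in>linf. \<phi> (\<lambda>x. c * f x) = c * \<phi> f)
          \<and> (\<forall>f\<in>linf. (\<forall>x\<in>TT. f x \<ge> 0) \<longrightarrow> \<phi> f \<ge> 0)
          \<and> \<phi> (indicator TT) = 1
          \<and> (\<forall>f. f \<notin> linf \<longrightarrow> \<phi> f = 0)}"

definition conv :: "((real set \<Rightarrow> real) \<Rightarrow> real) \<Rightarrow> ((real set \<Rightarrow> real) \<Rightarrow> real)
    \<Rightarrow> ((real set \<Rightarrow> real) \<Rightarrow> real)" where
  "conv \<mu> \<nu> f = (if f \<in> linf then
      \<mu> (\<lambda>x. if x \<in> TT then \<nu> (\<lambda>y. if y \<in> TT then f (hat x y) else 0) else 0)
    else 0)"

definition meas :: "((real set \<Rightarrow> real) \<Rightarrow> real) \<Rightarrow> real set set \<Rightarrow> real" where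
  "meas \<mu> E = \<mu> (indicator E)"

end

theory Submission
  imports Defs
begin

text \<open>Disjointify the sets \<open>E\<^sub>j\<close> to \<open>F\<^sub>j\<close>, keeping \<open>\<mu>\<^sub>i(F\<^sub>j) = \<delta>\<^sub>i\<^sub>j\<close>, and let
  \<open>G\<close> be the union of the sets \<open>F\<^sub>j ^ F\<^sub>j\<close>. As \<open>^\<close> is injective on \<open>TT\<close>, the inner
  integral in \<open>(\<nu> ^ \<nu>)(G)\<close> equals \<open>\<nu>(F\<^sub>j)\<close> at points of \<open>F\<^sub>j\<close>; so if \<open>\<nu>\<close>
  vanishes on every \<open>F\<^sub>k\<close> with \<open>k \<noteq> i\<close>, then \<open>(\<nu> ^ \<nu>)(G) = \<nu>(F\<^sub>i)\<^sup>2\<close>.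
  Hence each idempotent \<open>\<mu>\<^sub>i\<close> gives \<open>G\<close> measure 1, and so does every limit point
  \<open>\<mu>\<close>. But all \<open>\<mu>\<^sub>i\<close> except one vanish on \<open>F\<^sub>j\<close>, so \<open>\<mu>(F\<^sub>j) = 0\<close> for all \<open>j\<close>,
  and an idempotent \<open>\<mu>\<close> would give \<open>G\<close> measure 0.\<close>

lemma linfI:
  assumes "\<And>x. x \<in> TT \<Longrightarrow> \<bar>f x\<bar> \<le> B" "\<And>x. x \<notin> TT \<Longrightarrow> f x = 0"
  shows "f \<in> linf"
  unfolding linf_def bounded_iff using assms by auto

lemma linfE:
  assumes "f \<in> linf"
  obtains B where "\<And>x. x \<in> TT \<Longrightarrow> \<bar>f x\<bar> \<le> B" "\<And>x. x \<notin> TT \<Longrightarrow> f x = 0"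
  using assms unfolding linf_def bounded_iff by auto

lemma linf_add: "f \<in> linf \<Longrightarrow> g \<in> linf \<Longrightarrow> (\<lambda>x. f x + g x) \<in> linf"
proof (elim linfE)
  fix B C
  assume "\<And>x. x \<in> TT \<Longrightarrow> \<bar>f x\<bar> \<le> B" "\<And>x. x \<notin> TT \<Longrightarrow> f x = 0"
    and "\<And>x. x \<in> TT \<Longrightarrow> \<bar>g x\<bar> \<le> C" "\<And>x. x \<notin> TT \<Longrightarrow> g x = 0"
  then show ?thesis
    by (intro linfI[where B = "B + C"]) (smt (verit))+
qed

lemma linf_diff: "f \<in> linf \<Longrightarrow> g \<in> linf \<Longrightarrow> (\<lambda>x. f x - g x) \<in> linf"
proof (elim linfE)
  fix B C
  assume "\<And>x. x \<in> TT \<Longrightarrow> \<bar>f x\<bar> \<le> B" "\<And>x. x \<notin> TT \<Longrightarrow> f x = 0"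
    and "\<And>x. x \<in> TT \<Longrightarrow> \<bar>g x\<bar> \<le> C" "\<And>x. x \<notin> TT \<Longrightarrow> g x = 0"
  then show ?thesis
    by (intro linfI[where B = "B + C"]) (smt (verit))+
qed

lemma indicator_in_linf: "A \<subseteq> TT \<Longrightarrow> (indicator A :: real set \<Rightarrow> real) \<in> linf"
  by (rule linfI[where B = 1]) (auto simp: indicator_def)

lemma PrT_add: "\<phi> \<in> PrT \<Longrightarrow> f \<in> linf \<Longrightarrow> g \<in> linf \<Longrightarrow> \<phi> (\<lambda>x. f x + g x) = \<phi> f + \<phi> g"
  unfolding PrT_def by simp

lemma PrT_scale: "\<phi> \<in> PrT \<Longrightarrow> f \<in> linf \<Longrightarrow> \<phi> (\<lambda>x. c * f x) = c * \<phi> f"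
  unfolding PrT_def by simp

lemma PrT_nonneg: "\<phi> \<in> PrT \<Longrightarrow> f \<in> linf \<Longrightarrow> (\<And>x. x \<in> TT \<Longrightarrow> f x \<ge> 0) \<Longrightarrow> \<phi> f \<ge> 0"
  unfolding PrT_def by simp

lemma PrT_mono:
  assumes "\<phi> \<in> PrT" "f \<in> linf" "g \<in> linf" "\<And>x. x \<in> TT \<Longrightarrow> f x \<le> g x"
  shows "\<phi> f \<le> \<phi> g"
proof -
  have "\<phi> g = \<phi> f + \<phi> (\<lambda>x. g x - f x)"
    using PrT_add[OF assms(1,2) linf_diff[OF assms(3,2)]] by simp
  moreover have "\<phi> (\<lambda>x. g x - f x) \<ge> 0"
    using PrT_nonneg[OF assms(1) linf_diff[OF assms(3,2)]] assms(4) by simp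
  ultimately show ?thesis by simp
qed

lemma meas_empty:
  assumes "\<phi> \<in> PrT"
  shows "meas \<phi> {} = 0"
proof -
  have "(indicator {} :: real set \<Rightarrow> real) = (\<lambda>_. 0)"
    by (rule ext) simp
  then show ?thesis
    using PrT_scale[OF assms indicator_in_linf[of "{}"], of 0] by (simp add: meas_def)
qed

lemma meas_nonneg: "\<phi> \<in> PrT \<Longrightarrow> A \<subseteq> TT \<Longrightarrow> meas \<phi> A \<ge> 0"
  unfolding meas_def by (rule PrT_nonneg[OF _ indicator_in_linf]) auto

lemma meas_mono: "\<phi> \<in> PrT \<Longrightarrow> A \<subseteq> B \<Longrightarrow> B \<subseteq> TT \<Longrightarrow> meas \<phi> A \<le> meas \<phi> B"
  unfolding meas_def
  by (rule PrT_mono[OF _ indicator_in_linf indicator_in_linf]) (auto simp: indicator_def)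

lemma meas_Un_le:
  assumes "\<phi> \<in> PrT" "A \<subseteq> TT" "B \<subseteq> TT"
  shows "meas \<phi> (A \<union> B) \<le> meas \<phi> A + meas \<phi> B"
proof -
  have "\<phi> (indicator (A \<union> B)) \<le> \<phi> (\<lambda>x. indicator A x + indicator B x)"
    using assms
    by (intro PrT_mono[OF assms(1) indicator_in_linf] linf_add indicator_in_linf)
      (auto simp: indicator_def)
  also have "\<dots> = \<phi> (indicator A) + \<phi> (indicator B)"
    using assms by (intro PrT_add indicator_in_linf)
  finally show ?thesis unfolding meas_def .
qed

lemma meas_UN_le:
  fixes n :: nat
  assumes "\<phi> \<in> PrT" "\<And>k. A k \<subseteq> TT"
  shows "meas \<phi> (\<Union>k<n. A k) \<le> (\<Sum>k<n. meas \<phi> (A k))"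
proof (induction n)
  case 0
  show ?case using meas_empty[OF assms(1)] by simp
next
  case (Suc n)
  have "meas \<phi> (\<Union>k<Suc n. A k) \<le> meas \<phi> (A n) + meas \<phi> (\<Union>k<n. A k)"
    using meas_Un_le[OF assms(1)] assms(2) by (simp add: lessThan_Suc UN_least)
  with Suc show ?case by simp
qed

lemma meas_disjointed_eq:
  assumes "\<And>i. mu i \<in> PrT" "\<And>j. E j \<subseteq> TT"
    and "\<And>i j. meas (mu i) (E j) = (if i = j then 1 else 0)"
  shows "meas (mu i) (disjointed E j) = (if i = j then 1 else 0)"
proof -
  have D_TT: "disjointed E k \<subseteq> TT" for k
    using disjointed_subset assms(2) by (rule order_trans)
  have "1 = meas (mu j) (E j)"
    using assms(3) by simp
  also have "\<dots> \<le> meas (mu j) (disjointed E j \<union> (\<Union>k<j. E k))"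
    using assms(1,2) D_TT by (intro meas_mono) (auto simp: disjointed_def)
  also have "\<dots> \<le> meas (mu j) (disjointed E j) + meas (mu j) (\<Union>k<j. E k)"
    using assms(1,2) D_TT by (intro meas_Un_le) auto
  also have "meas (mu j) (\<Union>k<j. E k) \<le> (\<Sum>k<j. meas (mu j) (E k))"
    using assms(1,2) by (rule meas_UN_le)
  also have "(\<Sum>k<j. meas (mu j) (E k)) = 0"
    using assms(3) by simp
  finally have "1 \<le> meas (mu j) (disjointed E j)"
    by simp
  moreover have "meas (mu i) (disjointed E j) \<le> meas (mu i) (E j)"
    using assms(1,2) by (intro meas_mono disjointed_subset)
  moreover have "0 \<le> meas (mu i) (disjointed E j)"
    using assms(1) D_TT by (rule meas_nonneg)
  ultimately show ?thesis
    using assms(3)[of i j] by (cases "i = j") auto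
qed

lemma TT_subset: "a \<in> TT \<Longrightarrow> a \<subseteq> {0<..1}"
  by (induction rule: TT.induct) (auto simp: hat_def)

lemma hat_inter_atMost:
  assumes "a \<subseteq> {0<..1}" "b \<subseteq> {0<..1}"
  shows "hat a b \<inter> {..1/2} = (\<lambda>t. t / 2) ` a"
proof -
  have "(\<lambda>t. t / 2) ` a \<subseteq> {..1/2}" "(\<lambda>t. (t + 1) / 2) ` b \<inter> {..1/2} = {}"
    using assms by auto
  then show ?thesis unfolding hat_def by blast
qed

lemma hat_inter_greaterThan:
  assumes "a \<subseteq> {0<..1}" "b \<subseteq> {0<..1}"
  shows "hat a b \<inter> {1/2<..} = (\<lambda>t. (t + 1) / 2) ` b"
proof -
  have "(\<lambda>t. (t + 1) / 2) ` b \<subseteq> {1/2<..}" "(\<lambda>t. t / 2) ` a \<inter> {1/2<..} = {}"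
    using assms by auto
  then show ?thesis unfolding hat_def by blast
qed

lemma hat_inject:
  assumes "a \<subseteq> {0<..1}" "b \<subseteq> {0<..1}" "c \<subseteq> {0<..1}" "d \<subseteq> {0<..1}"
  shows "hat a b = hat c d \<longleftrightarrow> a = c \<and> b = d"
proof
  assume eq: "hat a b = hat c d"
  have "(\<lambda>t::real. t / 2) ` a = (\<lambda>t. t / 2) ` c"
    using hat_inter_atMost[OF assms(1,2)] hat_inter_atMost[OF assms(3,4)] eq by simp
  moreover have "(\<lambda>t::real. (t + 1) / 2) ` b = (\<lambda>t. (t + 1) / 2) ` d"
    using hat_inter_greaterThan[OF assms(1,2)] hat_inter_greaterThan[OF assms(3,4)] eq by simp
  moreover have "inj (\<lambda>t::real. t / 2)" "inj (\<lambda>t::real. (t + 1) / 2)"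
    by (auto intro: injI)
  ultimately show "a = c \<and> b = d"
    by (simp add: inj_image_eq_iff)
qed simp

definition hat_diagonal :: "(nat \<Rightarrow> real set set) \<Rightarrow> real set set" where
  "hat_diagonal F = {hat u v | u v j. u \<in> F j \<and> v \<in> F j}"

lemma hat_diagonal_subset: "(\<And>j. F j \<subseteq> TT) \<Longrightarrow> hat_diagonal F \<subseteq> TT"
  by (auto simp: hat_diagonal_def intro: TT.hat)

lemma hat_in_hat_diagonal_iff:
  assumes "\<And>j. F j \<subseteq> TT" "x \<in> TT" "y \<in> TT"
  shows "hat x y \<in> hat_diagonal F \<longleftrightarrow> (\<exists>j. x \<in> F j \<and> y \<in> F j)"
proof
  assume "hat x y \<in> hat_diagonal F"
  then obtain u v j where "hat x y = hat u v" "u \<in> F j" "v \<in> F j"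
    unfolding hat_diagonal_def by blast
  moreover from this have "x = u \<and> y = v"
    using assms by (intro iffD1[OF hat_inject] TT_subset) auto
  ultimately show "\<exists>j. x \<in> F j \<and> y \<in> F j" by blast
qed (auto simp: hat_diagonal_def)

lemma meas_conv_hat_diagonal:
  assumes "\<And>j. F j \<subseteq> TT"
  shows "meas (conv \<mu> \<nu>) (hat_diagonal F)
    = \<mu> (\<lambda>x. if x \<in> TT then meas \<nu> {y. \<exists>j. x \<in> F j \<and> y \<in> F j} else 0)"
proof -
  have slice: "(\<lambda>y. if y \<in> TT then indicator (hat_diagonal F) (hat x y) else 0)
      = (indicator {y. \<exists>j. x \<in> F j \<and> y \<in> F j} :: real set \<Rightarrow> real)" if "x \<in> TT" for x
  proof
    fix y
    show "(if y \<in> TT then indicator (hat_diagonal F) (hat x y) else 0)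
        = (indicator {y. \<exists>j. x \<in> F j \<and> y \<in> F j} y :: real)"
    proof (cases "y \<in> TT")
      case True
      then show ?thesis
        by (simp add: indicator_def hat_in_hat_diagonal_iff[OF assms that True])
    next
      case False
      then have "y \<notin> F j" for j using assms by blast
      with False show ?thesis by (simp add: indicator_def)
    qed
  qed
  have "meas (conv \<mu> \<nu>) (hat_diagonal F)
      = \<mu> (\<lambda>x. if x \<in> TT then \<nu> (\<lambda>y. if y \<in> TT then indicator (hat_diagonal F) (hat x y) else 0) else 0)"
    using indicator_in_linf[OF hat_diagonal_subset[OF assms]] by (simp add: meas_def conv_def)
  also have "\<dots> = \<mu> (\<lambda>x. if x \<in> TT then meas \<nu> {y. \<exists>j. x \<in> F j \<and> y \<in> F j} else 0)"
    unfolding meas_def using slice by (intro arg_cong[where f = \<mu>] ext) simp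
  finally show ?thesis .
qed

lemma disjoint_family_slice:
  assumes "disjoint_family F" "x \<in> F j"
  shows "{y. \<exists>k. x \<in> F k \<and> y \<in> F k} = F j"
proof (intro equalityI subsetI)
  fix y assume "y \<in> {y. \<exists>k. x \<in> F k \<and> y \<in> F k}"
  then obtain k where "x \<in> F k" "y \<in> F k" by blast
  moreover have "k = j"
    using disjoint_family_onD[OF assms(1), of k j] assms(2) \<open>x \<in> F k\<close> by blast
  ultimately show "y \<in> F j" by simp
qed (use assms(2) in blast)

lemma meas_conv_self_hat_diagonal:
  assumes "\<nu> \<in> PrT" "disjoint_family F" "\<And>j. F j \<subseteq> TT"
    and "\<And>k. k \<noteq> i \<Longrightarrow> meas \<nu> (F k) = 0"
  shows "meas (conv \<nu> \<nu>) (hat_diagonal F) = (meas \<nu> (F i))\<^sup>2"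
proof -
  have "(if x \<in> TT then meas \<nu> {y. \<exists>j. x \<in> F j \<and> y \<in> F j} else 0)
      = meas \<nu> (F i) * indicator (F i) x" for x
  proof (cases "\<exists>j. x \<in> F j")
    case True
    then obtain j where "x \<in> F j" by blast
    moreover have "x \<in> F i \<longleftrightarrow> j = i"
      using \<open>x \<in> F j\<close> \<open>disjoint_family F\<close> unfolding disjoint_family_on_def by blast
    ultimately show ?thesis
      using disjoint_family_slice[OF assms(2)] assms(3,4)[of j] by (auto simp: indicator_def)
  next
    case False
    then have "{y. \<exists>j. x \<in> F j \<and> y \<in> F j} = {}" by blast
    with False show ?thesis
      using meas_empty[OF assms(1)] by (auto simp: indicator_def)
  qed
  then show ?thesis
    using meas_conv_hat_diagonal[OF assms(3)] PrT_scale[OF assms(1) indicator_in_linf[OF assms(3)]]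
    by (simp add: meas_def power2_eq_square)
qed

lemma open_Collect_apply_neq: "open {\<nu>::'a \<Rightarrow> 'b::t2_space. \<nu> x \<noteq> c}"
  by (intro open_Collect_neq continuous_on_product_coordinates continuous_on_const)

lemma islimpt_range_apply:
  fixes mu :: "nat \<Rightarrow> 'a \<Rightarrow> 'b::t2_space"
  assumes lim: "\<mu> islimpt range mu" and eq: "\<And>i. i \<noteq> j \<Longrightarrow> mu i x = c"
  shows "\<mu> x = c"
proof (rule ccontr)
  assume "\<mu> x \<noteq> c"
  \<comment> \<open>\<open>T\<close> excludes \<open>mu j\<close> unless \<open>mu j = \<mu>\<close>, so the point of \<open>range mu\<close> it provides is some \<open>mu i\<close> with \<open>i \<noteq> j\<close>.\<close>
  obtain T where T: "open T" "\<mu> \<in> T" "T \<subseteq> {\<nu>. \<nu> x \<noteq> c}" "mu j \<in> T \<Longrightarrow> mu j = \<mu>"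
  proof (cases "\<mu> = mu j")
    case True
    show thesis
      by (rule that[OF open_Collect_apply_neq[of x c]]) (use True \<open>\<mu> x \<noteq> c\<close> in auto)
  next
    case False
    then obtain y where "\<mu> y \<noteq> mu j y" by blast
    show thesis
      by (rule that[OF open_Int[OF open_Collect_apply_neq[of x c] open_Collect_apply_neq[of y "mu j y"]]])
        (use \<open>\<mu> y \<noteq> mu j y\<close> \<open>\<mu> x \<noteq> c\<close> in auto)
  qed
  obtain \<nu> where "\<nu> \<in> range mu" "\<nu> \<in> T" "\<nu> \<noteq> \<mu>"
    by (rule islimptE[OF lim T(2,1)])
  then obtain i where "mu i \<in> T" "mu i \<noteq> \<mu>" by blast
  with T have "i \<noteq> j" "mu i x \<noteq> c" by auto
  with eq show False by blast
qed

theorem proposition6p1: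
  fixes mu :: "nat \<Rightarrow> ((real set \<Rightarrow> real) \<Rightarrow> real)"
    and E :: "nat \<Rightarrow> real set set"
  assumes "\<And>i. mu i \<in> PrT"
    and "\<And>i. conv (mu i) (mu i) = mu i"
    and "\<And>j. E j \<subseteq> TT"
    and "\<And>i j. meas (mu i) (E j) = (if i = j then 1 else 0)"
  shows "\<forall>\<mu>\<in>PrT. \<mu> islimpt range mu \<longrightarrow> conv \<mu> \<mu> \<noteq> \<mu>"
proof (intro ballI impI notI)
  fix \<mu> assume "\<mu> \<in> PrT" and lim: "\<mu> islimpt range mu" and idem: "conv \<mu> \<mu> = \<mu>"
  define F where "F = disjointed E"
  have F_disjoint: "disjoint_family F"
    unfolding F_def by (rule disjoint_family_disjointed)
  have F_TT: "F j \<subseteq> TT" for j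
    unfolding F_def using disjointed_subset assms(3) by (rule order_trans)
  have mu_F: "meas (mu i) (F j) = (if i = j then 1 else 0)" for i j
    unfolding F_def using assms(1,3,4) by (rule meas_disjointed_eq)
  have "meas \<mu> (F j) = 0" for j
    unfolding meas_def
    by (rule islimpt_range_apply[OF lim, where j = j]) (simp add: mu_F[unfolded meas_def])
  then have "meas \<mu> (hat_diagonal F) = 0"
    using meas_conv_self_hat_diagonal[OF \<open>\<mu> \<in> PrT\<close> F_disjoint F_TT, of 0] idem by simp
  moreover have "meas (mu i) (hat_diagonal F) = 1" for i
    using meas_conv_self_hat_diagonal[OF assms(1) F_disjoint F_TT, of i i] assms(2) mu_F by simp
  then have "meas \<mu> (hat_diagonal F) = 1"
    unfolding meas_def by (rule islimpt_range_apply[OF lim, where j = 0])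
  ultimately show False by simp
qed

end
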